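(* For every cake $C$ and every family $S$ of usable pieces, $$\mathrm{PropEF}(C,2,S)\ \ge\ \mathrm{Prop}(C,2,S)\cdot\inf_{s\in S}\mathrm{PropEF}(s,2,S).$$
   Context: A cake is a Borel subset of $\mathbb{R}^d$; $S$ is a family of Borel subsets of $\mathbb{R}^d$. For a cake $D$ (here $D=C$ or $D=s\in S$), a value measure on $D$ is $V(X)=\int_X v$ with $v$ non-negative, bounded, integrable on $D$, $V(D)<\infty$; $V^S(X):=\sup\{V(s'):s'\in S,s'\subseteq X\}$. For $n$ agents with value measures $V_1,\dots,V_n$ on $D$, an $S$-allocation of $D$ is $(X_1,\dots,X_n)$ with $X_i\in S$ pairwise disjoint and $\bigcup_i X_i\subseteq D$; it is envy-free if $V_i^S(X_i)\ge V_i^S(X_j)$ for all $i,j$. $\mathrm{PropEF}(D,n,S):=\inf_{V_1,\dots,V_n}\sup_X\min_i V_i(X_i)/V_i(D)$, infimum over all $n$-tuples of value measures on $D$ and supremum over envy-free $S$-allocations of $D$; $\mathrm{Prop}(D,n,S)$ is defined identically with the supremum over all $S$-allocations of $D$. *)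

theory Defs
  imports "HOL-Analysis.Analysis"
begin

text \<open>A value measure on a cake D is given by its density v: non-negative and bounded on D,
(Lebesgue) integrable on D, with V(D) > 0 (so that the ratio V(X)/V(D) is meaningful).\<close>

definition val :: "('a::euclidean_space \<Rightarrow> real) \<Rightarrow> 'a set \<Rightarrow> real" where
  "val v X = (LINT x:X|lebesgue. v x)"

definition value_density :: "'a::euclidean_space set \<Rightarrow> ('a \<Rightarrow> real) \<Rightarrow> bool" where
  "value_density D v \<longleftrightarrow> (\<forall>x\<in>D. 0 \<le> v x) \<and> (\<exists>B. \<forall>x\<in>D. v x \<le> B)
      \<and> set_integrable lebesgue D v \<and> 0 < val v D"

definition valS :: "'a::euclidean_space set set \<Rightarrow> ('a \<Rightarrow> real) \<Rightarrow> 'a set \<Rightarrow> real" where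
  "valS S v X = Sup {val v s' | s'. s' \<in> S \<and> s' \<subseteq> X}"

definition S_allocation :: "'a set \<Rightarrow> nat \<Rightarrow> 'a set set \<Rightarrow> (nat \<Rightarrow> 'a set) \<Rightarrow> bool" where
  "S_allocation D n S X \<longleftrightarrow> (\<forall>i<n. X i \<in> S) \<and> (\<forall>i<n. \<forall>j<n. i \<noteq> j \<longrightarrow> X i \<inter> X j = {})
      \<and> (\<Union>i<n. X i) \<subseteq> D"

definition envy_free :: "'a::euclidean_space set set \<Rightarrow> nat \<Rightarrow> (nat \<Rightarrow> 'a \<Rightarrow> real) \<Rightarrow> (nat \<Rightarrow> 'a set) \<Rightarrow> bool" where
  "envy_free S n v X \<longleftrightarrow> (\<forall>i<n. \<forall>j<n. valS S (v i) (X i) \<ge> valS S (v i) (X j))"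

definition min_share :: "nat \<Rightarrow> 'a::euclidean_space set \<Rightarrow> (nat \<Rightarrow> 'a \<Rightarrow> real) \<Rightarrow> (nat \<Rightarrow> 'a set) \<Rightarrow> real" where
  "min_share n D v X = Min ((\<lambda>i. val (v i) (X i) / val (v i) D) ` {..<n})"

text \<open>Values taken in ennreal: sup of the empty set is 0, inf of the empty set is \<infinity>.\<close>

definition PropEF :: "'a::euclidean_space set \<Rightarrow> nat \<Rightarrow> 'a set set \<Rightarrow> ennreal" where
  "PropEF D n S = (INF v \<in> {v. \<forall>i<n. value_density D (v i)}.
      SUP X \<in> {X. S_allocation D n S X \<and> envy_free S n v X}. ennreal (min_share n D v X))"

definition Prop :: "'a::euclidean_space set \<Rightarrow> nat \<Rightarrow> 'a set set \<Rightarrow> ennreal" where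
  "Prop D n S = (INF v \<in> {v. \<forall>i<n. value_density D (v i)}.
      SUP X \<in> {X. S_allocation D n S X}. ennreal (min_share n D v X))"

end

theory Submission
  imports Defs
begin

text \<open>Fix two agents and an arbitrary allocation \<open>(Y\<^sub>0, Y\<^sub>1)\<close> of \<open>C\<close> with minimal share \<open>m\<close>.
If nobody envies, it is itself envy-free; if both agents envy, swapping the pieces makes it
envy-free without lowering any share. Either way this suffices, since \<open>PropEF \<le> 1\<close>.
If exactly one agent envies, the piece \<open>s\<close> he envies is worth at least \<open>m\<close> of \<open>C\<close> to both
agents. Dividing \<open>s\<close> envy-freely gives each agent at least \<open>PropEF s\<close> of \<open>s\<close>, hence at least
\<open>m \<cdot> PropEF s\<close> of \<open>C\<close>; and envy-freeness does not refer to the cake, so this is also an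
envy-free allocation of \<open>C\<close>.\<close>

lemma val_nonneg:
  fixes v :: "'a::euclidean_space \<Rightarrow> real"
  assumes "\<forall>x\<in>A. 0 \<le> v x"
  shows "0 \<le> val v A"
  unfolding val_def set_lebesgue_integral_def
  using assms by (intro integral_nonneg_AE) (auto split: split_indicator)

lemma val_mono:
  fixes v :: "'a::euclidean_space \<Rightarrow> real"
  assumes "A \<subseteq> B" "A \<in> sets lebesgue" "\<forall>x\<in>B. 0 \<le> v x" "set_integrable lebesgue B v"
  shows "val v A \<le> val v B"
proof -
  have "set_integrable lebesgue A v"
    using assms set_integrable_subset by blast
  then have "(LINT x|lebesgue. indicator A x *\<^sub>R v x) \<le> (LINT x|lebesgue. indicator B x *\<^sub>R v x)"
    using assms unfolding set_integrable_def
    by (intro integral_mono) (auto split: split_indicator)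
  then show ?thesis
    unfolding val_def set_lebesgue_integral_def .
qed

lemma value_density_subset:
  assumes "value_density D v" "s \<subseteq> D" "s \<in> sets lebesgue" "0 < val v s"
  shows "value_density s v"
  using assms set_integrable_subset unfolding value_density_def by blast

lemma valS_eq_val:
  fixes v :: "'a::euclidean_space \<Rightarrow> real"
  assumes "S \<subseteq> sets lebesgue" "X \<in> S" "\<forall>x\<in>X. 0 \<le> v x" "set_integrable lebesgue X v"
  shows "valS S v X = val v X"
  unfolding valS_def
proof (rule cSup_eq_maximum)
  show "val v X \<in> {val v s' |s'. s' \<in> S \<and> s' \<subseteq> X}"
    using assms by auto
next
  fix y assume "y \<in> {val v s' |s'. s' \<in> S \<and> s' \<subseteq> X}"
  then obtain s' where "y = val v s'" "s' \<in> S" "s' \<subseteq> X" by auto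
  then show "y \<le> val v X"
    using val_mono[of s' X v] assms by blast
qed

lemma envy_free_iff_val:
  fixes v :: "nat \<Rightarrow> 'a::euclidean_space \<Rightarrow> real"
  assumes "S \<subseteq> sets lebesgue" "S_allocation D n S X" "\<forall>i<n. value_density D (v i)"
  shows "envy_free S n v X \<longleftrightarrow> (\<forall>i<n. \<forall>j<n. val (v i) (X j) \<le> val (v i) (X i))"
proof -
  have "valS S (v i) (X j) = val (v i) (X j)" if "i < n" "j < n" for i j
  proof -
    have "X j \<in> S" "X j \<subseteq> D"
      using assms(2) \<open>j < n\<close> unfolding S_allocation_def by auto
    moreover have "\<forall>x\<in>X j. 0 \<le> v i x" "set_integrable lebesgue (X j) (v i)"
      using calculation assms \<open>i < n\<close> set_integrable_subset unfolding value_density_def by blast+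
    ultimately show ?thesis
      using valS_eq_val[OF assms(1)] by blast
  qed
  then show ?thesis
    unfolding envy_free_def by auto
qed

lemma min_share_le:
  "i < n \<Longrightarrow> min_share n D v X \<le> val (v i) (X i) / val (v i) D"
  unfolding min_share_def by simp

lemma le_min_share_iff:
  "0 < n \<Longrightarrow> m \<le> min_share n D v X \<longleftrightarrow> (\<forall>i<n. m \<le> val (v i) (X i) / val (v i) D)"
  unfolding min_share_def by (subst Min_ge_iff) auto

lemma min_share_subcake:
  fixes v :: "nat \<Rightarrow> 'a::euclidean_space \<Rightarrow> real"
  assumes "0 < n" "0 \<le> m" "S_allocation s n S X" "\<forall>i<n. value_density s (v i)"
    and good: "\<forall>i<n. m \<le> val (v i) s / val (v i) D"
  shows "m * min_share n s v X \<le> min_share n D v X"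
  unfolding le_min_share_iff[OF \<open>0 < n\<close>]
proof (intro allI impI)
  fix i assume "i < n"
  let ?r = "val (v i) (X i) / val (v i) s"
  have "X i \<subseteq> s"
    using assms(3) \<open>i < n\<close> unfolding S_allocation_def by auto
  moreover have "0 < val (v i) s" "\<forall>x\<in>s. 0 \<le> v i x"
    using assms(4) \<open>i < n\<close> unfolding value_density_def by auto
  ultimately have "0 \<le> ?r"
    using val_nonneg[of "X i" "v i"] by (simp add: subset_iff)
  have "m * min_share n s v X \<le> m * ?r"
    using min_share_le[OF \<open>i < n\<close>] \<open>0 \<le> m\<close> by (rule mult_left_mono)
  also have "\<dots> \<le> val (v i) s / val (v i) D * ?r"
    using good \<open>i < n\<close> \<open>0 \<le> ?r\<close> by (intro mult_right_mono) auto
  also have "\<dots> = val (v i) (X i) / val (v i) D"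
    using \<open>0 < val (v i) s\<close> by simp
  finally show "m * min_share n s v X \<le> val (v i) (X i) / val (v i) D" .
qed

definition ef_share :: "'a::euclidean_space set \<Rightarrow> nat \<Rightarrow> 'a set set \<Rightarrow> (nat \<Rightarrow> 'a \<Rightarrow> real) \<Rightarrow> ennreal" where
  "ef_share D n S v = (SUP X \<in> {X. S_allocation D n S X \<and> envy_free S n v X}. ennreal (min_share n D v X))"

lemma PropEF_le_ef_share:
  "\<forall>i<n. value_density D (v i) \<Longrightarrow> PropEF D n S \<le> ef_share D n S v"
  unfolding PropEF_def ef_share_def by (rule INF_lower) simp

lemma min_share_le_ef_share:
  "S_allocation D n S X \<Longrightarrow> envy_free S n v X \<Longrightarrow> ennreal (min_share n D v X) \<le> ef_share D n S v"
  unfolding ef_share_def by (rule SUP_upper) simp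

lemma ef_share_subcake:
  fixes v :: "nat \<Rightarrow> 'a::euclidean_space \<Rightarrow> real"
  assumes "s \<subseteq> D" "0 < n" "0 \<le> m" "\<forall>i<n. value_density s (v i)"
    and "\<forall>i<n. m \<le> val (v i) s / val (v i) D"
  shows "ennreal m * ef_share s n S v \<le> ef_share D n S v"
proof -
  have "ennreal m * ennreal (min_share n s v X) \<le> ef_share D n S v"
    if "S_allocation s n S X" "envy_free S n v X" for X
  proof -
    have "S_allocation D n S X"
      using that(1) \<open>s \<subseteq> D\<close> unfolding S_allocation_def by blast
    moreover have "ennreal m * ennreal (min_share n s v X) \<le> ennreal (min_share n D v X)"
      using min_share_subcake[OF assms(2,3) that(1) assms(4,5)] \<open>0 \<le> m\<close>
      by (simp add: ennreal_mult'[symmetric] ennreal_leI)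
    ultimately show ?thesis
      using min_share_le_ef_share that(2) order_trans by blast
  qed
  then show ?thesis
    unfolding ef_share_def[of s] SUP_mult_left_ennreal by (auto intro: SUP_least)
qed

lemma PropEF_le_1:
  fixes w :: "'a::euclidean_space \<Rightarrow> real"
  assumes "value_density D w" "S \<subseteq> sets lebesgue" "0 < n"
  shows "PropEF D n S \<le> 1"
proof -
  have "min_share n D (\<lambda>_. w) X \<le> 1" if "S_allocation D n S X" for X
  proof -
    have "X 0 \<subseteq> D" "X 0 \<in> sets lebesgue"
      using that assms(2,3) unfolding S_allocation_def by auto
    then have "val w (X 0) \<le> val w D" "0 < val w D"
      using assms(1) val_mono unfolding value_density_def by blast+
    then have "val w (X 0) / val w D \<le> 1"
      by simp
    then show ?thesis
      using min_share_le[OF \<open>0 < n\<close>, of D "\<lambda>_. w" X] by simp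
  qed
  then have "ef_share D n S (\<lambda>_. w) \<le> 1"
    unfolding ef_share_def by (auto intro!: SUP_least simp: ennreal_le_1)
  moreover have "PropEF D n S \<le> ef_share D n S (\<lambda>_. w)"
    using assms(1) by (intro PropEF_le_ef_share) simp
  ultimately show ?thesis by order
qed

lemma ef_share_ge_of_envy_free:
  fixes v :: "nat \<Rightarrow> 'a::euclidean_space \<Rightarrow> real"
  assumes "S \<subseteq> sets lebesgue" "0 < n" "\<forall>i<n. value_density D (v i)"
    and X: "S_allocation D n S X" "envy_free S n v X" and m: "0 < m" "m \<le> min_share n D v X"
  shows "ennreal m * (INF s \<in> S. PropEF s n S) \<le> ef_share D n S v"
proof -
  have X0: "X 0 \<in> S" "X 0 \<subseteq> D"
    using X(1) \<open>0 < n\<close> unfolding S_allocation_def by auto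
  have vD: "value_density D (v 0)"
    using assms(3) \<open>0 < n\<close> by blast
  have "m \<le> val (v 0) (X 0) / val (v 0) D"
    using m(2) min_share_le[OF \<open>0 < n\<close>] by (rule order_trans)
  with \<open>0 < m\<close> have "0 < val (v 0) (X 0) / val (v 0) D"
    by linarith
  with vD have "0 < val (v 0) (X 0)"
    unfolding value_density_def by (auto simp: zero_less_divide_iff)
  moreover have "X 0 \<in> sets lebesgue"
    using X0(1) assms(1) by blast
  ultimately have "value_density (X 0) (v 0)"
    using value_density_subset[OF vD X0(2)] by blast
  then have "PropEF (X 0) n S \<le> 1"
    using assms(1,2) by (rule PropEF_le_1)
  then have "(INF s \<in> S. PropEF s n S) \<le> 1"
    using INF_lower[OF X0(1), of "\<lambda>s. PropEF s n S"] by order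
  then have "ennreal m * (INF s \<in> S. PropEF s n S) \<le> ennreal m"
    using mult_left_mono[of _ 1 "ennreal m"] by simp
  also have "\<dots> \<le> ennreal (min_share n D v X)"
    using m(2) by (rule ennreal_leI)
  also have "\<dots> \<le> ef_share D n S v"
    using X by (rule min_share_le_ef_share)
  finally show ?thesis .
qed

lemma ef_share_ge_of_good_piece:
  fixes v :: "nat \<Rightarrow> 'a::euclidean_space \<Rightarrow> real"
  assumes "S \<subseteq> sets lebesgue" "s \<in> S" "s \<subseteq> D" "0 < n" "\<forall>i<n. value_density D (v i)"
    and m: "0 < m" "\<forall>i<n. m \<le> val (v i) s / val (v i) D"
  shows "ennreal m * (INF s \<in> S. PropEF s n S) \<le> ef_share D n S v"
proof -
  have vs: "value_density s (v i)" if "i < n" for i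
  proof (rule value_density_subset)
    show "value_density D (v i)"
      using assms(5) that by blast
    with m that have "0 < val (v i) s / val (v i) D"
      by force
    then show "0 < val (v i) s"
      using \<open>value_density D (v i)\<close> unfolding value_density_def by (auto simp: zero_less_divide_iff)
  qed (use assms in auto)
  have "ennreal m * (INF s \<in> S. PropEF s n S) \<le> ennreal m * PropEF s n S"
    using \<open>s \<in> S\<close> by (intro mult_left_mono INF_lower) auto
  also have "\<dots> \<le> ennreal m * ef_share s n S v"
    using vs by (intro mult_left_mono PropEF_le_ef_share) auto
  also have "\<dots> \<le> ef_share D n S v"
    using vs m assms(3,4) by (intro ef_share_subcake) auto
  finally show ?thesis .
qed

lemma all_less_2_iff: "(\<forall>i<2::nat. P i) \<longleftrightarrow> P 0 \<and> P 1"
  by (auto simp: less_2_cases_iff)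

lemma S_allocation_2_iff:
  "S_allocation D 2 S X \<longleftrightarrow> X 0 \<in> S \<and> X 1 \<in> S \<and> X 0 \<inter> X 1 = {} \<and> X 0 \<union> X 1 \<subseteq> D"
proof -
  have "{..<2::nat} = {0, 1}" by auto
  then show ?thesis
    unfolding S_allocation_def all_less_2_iff by auto
qed

lemma min_share_mult_INF_PropEF_le_ef_share:
  fixes v :: "nat \<Rightarrow> 'a::euclidean_space \<Rightarrow> real"
  assumes S: "S \<subseteq> sets lebesgue" and vC: "\<forall>i<2. value_density C (v i)"
    and Y: "S_allocation C 2 S Y"
  shows "ennreal (min_share 2 C v Y) * (INF s \<in> S. PropEF s 2 S) \<le> ef_share C 2 S v"
proof (cases "min_share 2 C v Y \<le> 0")
  case True
  then show ?thesis by (simp add: ennreal_neg)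
next
  case False
  define m where "m = min_share 2 C v Y"
  have "0 < m" using False m_def by simp
  have Y01: "Y 0 \<in> S" "Y 1 \<in> S" "Y 0 \<subseteq> C" "Y 1 \<subseteq> C"
    using Y unfolding S_allocation_2_iff by auto
  have ratio_mono: "val (v i) (Y j) / val (v i) C \<le> val (v i) (Y k) / val (v i) C"
    if "i < 2" "val (v i) (Y j) \<le> val (v i) (Y k)" for i j k
  proof -
    have "0 < val (v i) C"
      using vC \<open>i < 2\<close> unfolding value_density_def by blast
    then show ?thesis
      using that(2) by (simp add: divide_right_mono)
  qed
  have m_le: "m \<le> val (v 0) (Y 0) / val (v 0) C" "m \<le> val (v 1) (Y 1) / val (v 1) C"
    unfolding m_def by (auto intro: min_share_le)
  have ef_iff: "envy_free S 2 v X \<longleftrightarrow>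
      val (v 0) (X 1) \<le> val (v 0) (X 0) \<and> val (v 1) (X 0) \<le> val (v 1) (X 1)"
    if "S_allocation C 2 S X" for X
    using envy_free_iff_val[OF S that vC] by (auto simp: all_less_2_iff)
  consider (neither) "val (v 0) (Y 1) \<le> val (v 0) (Y 0)" "val (v 1) (Y 0) \<le> val (v 1) (Y 1)"
    | (both) "val (v 0) (Y 0) \<le> val (v 0) (Y 1)" "val (v 1) (Y 1) \<le> val (v 1) (Y 0)"
    | (first_envies) "val (v 0) (Y 0) \<le> val (v 0) (Y 1)" "val (v 1) (Y 0) \<le> val (v 1) (Y 1)"
    | (second_envies) "val (v 0) (Y 1) \<le> val (v 0) (Y 0)" "val (v 1) (Y 1) \<le> val (v 1) (Y 0)"
    by linarith
  then have "ennreal m * (INF s \<in> S. PropEF s 2 S) \<le> ef_share C 2 S v"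
  proof cases
    case neither
    then have "envy_free S 2 v Y" using ef_iff Y by blast
    with S vC Y \<open>0 < m\<close> show ?thesis
      unfolding m_def by (intro ef_share_ge_of_envy_free) auto
  next
    case both
    define X where "X = (\<lambda>i::nat. if i = 0 then Y 1 else Y 0)"
    have X: "S_allocation C 2 S X"
      using Y unfolding S_allocation_2_iff X_def by auto
    moreover have "envy_free S 2 v X"
      using both ef_iff[OF X] unfolding X_def by simp
    moreover have "m \<le> min_share 2 C v X"
      using both m_le ratio_mono[of 0 0 1] ratio_mono[of 1 1 0]
      unfolding le_min_share_iff[OF pos2] all_less_2_iff X_def by auto
    ultimately show ?thesis
      using S vC \<open>0 < m\<close> by (intro ef_share_ge_of_envy_free) auto
  next
    case first_envies
    then have "\<forall>i<2. m \<le> val (v i) (Y 1) / val (v i) C"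
      using m_le ratio_mono[of 0 0 1] unfolding all_less_2_iff by auto
    with S Y01 vC \<open>0 < m\<close> show ?thesis
      by (intro ef_share_ge_of_good_piece) auto
  next
    case second_envies
    then have "\<forall>i<2. m \<le> val (v i) (Y 0) / val (v i) C"
      using m_le ratio_mono[of 1 1 0] unfolding all_less_2_iff by auto
    with S Y01 vC \<open>0 < m\<close> show ?thesis
      by (intro ef_share_ge_of_good_piece) auto
  qed
  then show ?thesis unfolding m_def .
qed

theorem mainTheorem9:
  fixes C :: "'a::euclidean_space set" and S :: "'a set set"
  assumes "C \<in> sets borel" and "S \<subseteq> sets borel"
  shows "PropEF C 2 S \<ge> Prop C 2 S * (INF s \<in> S. PropEF s 2 S)"
proof -
  let ?P = "INF s \<in> S. PropEF s 2 S"
  have S: "S \<subseteq> sets lebesgue"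
    using assms(2) by auto
  have "Prop C 2 S * ?P \<le> ef_share C 2 S v" if vC: "\<forall>i<2. value_density C (v i)" for v
  proof -
    have "Prop C 2 S \<le> (SUP X \<in> {X. S_allocation C 2 S X}. ennreal (min_share 2 C v X))"
      unfolding Prop_def using vC by (intro INF_lower) simp
    then have "Prop C 2 S * ?P \<le> (SUP X \<in> {X. S_allocation C 2 S X}. ennreal (min_share 2 C v X)) * ?P"
      by (rule mult_right_mono) simp
    also have "\<dots> = (SUP X \<in> {X. S_allocation C 2 S X}. ennreal (min_share 2 C v X) * ?P)"
      by (rule SUP_mult_right_ennreal)
    also have "\<dots> \<le> ef_share C 2 S v"
      using min_share_mult_INF_PropEF_le_ef_share[OF S vC] by (auto intro: SUP_least)
    finally show ?thesis .
  qed
  then show ?thesis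
    unfolding PropEF_def ef_share_def[symmetric] by (auto intro: INF_greatest)
qed

end
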